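(* Let $(\mu_z^\varepsilon)$ be a time-analytic local random walk on $\mathcal G$. Then for every pair of distinct vertices $x,y$ the continuous-time Ollivier–Ricci curvature ${}^{\mathcal O}\mathrm{Ric}(x,y)=\lim_{\varepsilon\downarrow0}\varepsilon^{-1}\,{}^{\mathcal O}\mathrm{Ric}_\varepsilon(x,y)$ exists and is finite.
   Context: $\mathcal G$ is a locally finite graph with vertex set $V$, $\mathrm d$ a distance on $V$ with $(V,\mathrm d)$ complete. A random walk is a family of probability measures $\mu_z^\varepsilon$ on $V$ ($z\in V$, $\varepsilon\in[0,1]$) with finite first moments, continuous in $\varepsilon$, $\mu_z^0=\delta_z$. It is local if for each $z$ there is a finite set $\mathcal K_z$ with $\mathrm{supp}(\mu_z^\varepsilon)\subset\mathcal K_z$ for all $\varepsilon$. It is time-analytic if for all $x,y$, $\varepsilon\mapsto\mu_x^\varepsilon(y)$ is analytic and admits an analytic continuation to $(-\delta_{xy},1+\delta_{xy})$ for some $\delta_{xy}>0$. ${}^{\mathcal O}\mathrm{Ric}_\varepsilon(x,y):=1-\mathcal W_1(\mu_x^\varepsilon,\mu_y^\varepsilon)/\mathrm d(x,y)$, with $\mathcal W_1$ the $L^1$-Wasserstein distance w.r.t. $\mathrm d$. *)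

theory Defs
  imports "HOL-Analysis.Analysis"
begin

definition locally_finite_graph :: "'v set \<Rightarrow> ('v \<Rightarrow> 'v \<Rightarrow> bool) \<Rightarrow> bool" where
  "locally_finite_graph V E \<longleftrightarrow>
     (\<forall>x y. E x y \<longrightarrow> x \<in> V \<and> y \<in> V \<and> E y x) \<and> (\<forall>x\<in>V. finite {y. E x y})"

definition prob_on :: "'v set \<Rightarrow> ('v \<Rightarrow> real) \<Rightarrow> bool" where
  "prob_on V m \<longleftrightarrow> (\<forall>v. m v \<ge> 0) \<and> (\<forall>v. v \<notin> V \<longrightarrow> m v = 0) \<and> (m has_sum 1) V"

definition finite_first_moment :: "'v set \<Rightarrow> ('v \<Rightarrow> 'v \<Rightarrow> real) \<Rightarrow> ('v \<Rightarrow> real) \<Rightarrow> bool" where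
  "finite_first_moment V d m \<longleftrightarrow> (\<exists>z\<in>V. (\<lambda>v. m v * d z v) summable_on V)"

definition couplings :: "'v set \<Rightarrow> ('v \<Rightarrow> 'v \<Rightarrow> real) \<Rightarrow> ('v \<Rightarrow> real) \<Rightarrow> ('v \<Rightarrow> real) \<Rightarrow> ('v \<times> 'v \<Rightarrow> real) set" where
  "couplings V d m1 m2 = {\<pi>. (\<forall>p. \<pi> p \<ge> 0) \<and> (\<forall>p. p \<notin> V \<times> V \<longrightarrow> \<pi> p = 0)
      \<and> (\<forall>a\<in>V. ((\<lambda>b. \<pi> (a, b)) has_sum m1 a) V)
      \<and> (\<forall>b\<in>V. ((\<lambda>a. \<pi> (a, b)) has_sum m2 b) V)
      \<and> (\<lambda>(a, b). \<pi> (a, b) * d a b) summable_on (V \<times> V)}"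

definition W1 :: "'v set \<Rightarrow> ('v \<Rightarrow> 'v \<Rightarrow> real) \<Rightarrow> ('v \<Rightarrow> real) \<Rightarrow> ('v \<Rightarrow> real) \<Rightarrow> real" where
  "W1 V d m1 m2 = Inf ((\<lambda>\<pi>. \<Sum>\<^sub>\<infinity>(a, b)\<in>V \<times> V. \<pi> (a, b) * d a b) ` couplings V d m1 m2)"

text \<open>A random walk: mu z eps is the measure mu_z^eps.\<close>
definition random_walk :: "'v set \<Rightarrow> ('v \<Rightarrow> 'v \<Rightarrow> real) \<Rightarrow> ('v \<Rightarrow> real \<Rightarrow> 'v \<Rightarrow> real) \<Rightarrow> bool" where
  "random_walk V d mu \<longleftrightarrow>
     (\<forall>z\<in>V. \<forall>\<epsilon>\<in>{0..1}. prob_on V (mu z \<epsilon>) \<and> finite_first_moment V d (mu z \<epsilon>))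
   \<and> (\<forall>z\<in>V. \<forall>y\<in>V. continuous_on {0..1} (\<lambda>\<epsilon>. mu z \<epsilon> y))
   \<and> (\<forall>z\<in>V. mu z 0 = (\<lambda>v. if v = z then 1 else 0))"

definition local_walk :: "'v set \<Rightarrow> ('v \<Rightarrow> real \<Rightarrow> 'v \<Rightarrow> real) \<Rightarrow> bool" where
  "local_walk V mu \<longleftrightarrow> (\<forall>z\<in>V. \<exists>K. finite K \<and> (\<forall>\<epsilon>\<in>{0..1}. {v. mu z \<epsilon> v \<noteq> 0} \<subseteq> K))"

definition real_analytic_on :: "(real \<Rightarrow> real) \<Rightarrow> real set \<Rightarrow> bool" where
  "real_analytic_on f S \<longleftrightarrow> (\<forall>x\<in>S. \<exists>r>0. \<exists>a :: nat \<Rightarrow> real.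
       \<forall>t. \<bar>t - x\<bar> < r \<longrightarrow> (\<lambda>n. a n * (t - x) ^ n) sums f t)"

definition time_analytic :: "'v set \<Rightarrow> ('v \<Rightarrow> real \<Rightarrow> 'v \<Rightarrow> real) \<Rightarrow> bool" where
  "time_analytic V mu \<longleftrightarrow> (\<forall>x\<in>V. \<forall>y\<in>V. \<exists>\<delta>>0. \<exists>f. real_analytic_on f {-\<delta><..<1+\<delta>}
       \<and> (\<forall>\<epsilon>\<in>{0..1}. f \<epsilon> = mu x \<epsilon> y))"

definition ORic_eps :: "'v set \<Rightarrow> ('v \<Rightarrow> 'v \<Rightarrow> real) \<Rightarrow> ('v \<Rightarrow> real \<Rightarrow> 'v \<Rightarrow> real) \<Rightarrow> real \<Rightarrow> 'v \<Rightarrow> 'v \<Rightarrow> real" where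
  "ORic_eps V d mu \<epsilon> x y = 1 - W1 V d (mu x \<epsilon>) (mu y \<epsilon>) / d x y"

end

(*
  On a finite set K containing the supports of both walks, W1 is the value of a finite
  transport problem. This value is jointly convex in the two marginals, and it is Lipschitz
  for the l1 distance of the marginals: a plan for one pair is repaired into a plan for a
  nearby pair by moving the l1 defect at cost at most the diameter of K.

  Analyticity gives right derivatives B_z(v) of the masses, so mu_z^eps = mu_z^0 + eps B_z + o(eps)
  in l1, and mu_z^0 + t B_z is itself a probability for small t >= 0. Along this affine path the
  transport distance is a convex function of t whose difference quotients are bounded below by
  the Lipschitz estimate, hence have a limit as t -> 0+. By the Lipschitz estimate once more,
  W1(mu_x^eps, mu_y^eps) differs from the value on the path by o(eps). Finally
  W1(mu_x^0, mu_y^0) = d(x, y) > 0, so Ric_eps(x, y) / eps converges.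
*)
theory Submission
  imports Defs
begin

section \<open>Finite transport problems\<close>

definition prob_supported_on :: "'v set \<Rightarrow> ('v \<Rightarrow> real) \<Rightarrow> bool" where
  "prob_supported_on K m \<longleftrightarrow> (\<forall>v. 0 \<le> m v) \<and> (\<forall>v. v \<notin> K \<longrightarrow> m v = 0) \<and> sum m K = 1"

definition transport_plans :: "'v set \<Rightarrow> ('v \<Rightarrow> real) \<Rightarrow> ('v \<Rightarrow> real) \<Rightarrow> ('v \<times> 'v \<Rightarrow> real) set" where
  "transport_plans K m1 m2 = {\<pi>. (\<forall>p. 0 \<le> \<pi> p) \<and> (\<forall>p. p \<notin> K \<times> K \<longrightarrow> \<pi> p = 0)
     \<and> (\<forall>a\<in>K. (\<Sum>b\<in>K. \<pi> (a, b)) = m1 a) \<and> (\<forall>b\<in>K. (\<Sum>a\<in>K. \<pi> (a, b)) = m2 b)}"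

definition transport_cost :: "('v \<Rightarrow> 'v \<Rightarrow> real) \<Rightarrow> 'v set \<Rightarrow> ('v \<times> 'v \<Rightarrow> real) \<Rightarrow> real" where
  "transport_cost d K \<pi> = (\<Sum>(a, b)\<in>K \<times> K. \<pi> (a, b) * d a b)"

definition transport_dist :: "('v \<Rightarrow> 'v \<Rightarrow> real) \<Rightarrow> 'v set \<Rightarrow> ('v \<Rightarrow> real) \<Rightarrow> ('v \<Rightarrow> real) \<Rightarrow> real" where
  "transport_dist d K m1 m2 = Inf (transport_cost d K ` transport_plans K m1 m2)"

lemma has_sum_finite_support_iff:
  fixes f :: "'a \<Rightarrow> 'b::{topological_comm_monoid_add, t2_space}"
  assumes "finite K" "K \<subseteq> A" "\<And>x. x \<in> A - K \<Longrightarrow> f x = 0"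
  shows "(f has_sum c) A \<longleftrightarrow> c = sum f K"
proof
  assume "(f has_sum c) A"
  then show "c = sum f K"
    using has_sum_finite_neutralI[of K A f, OF assms refl] has_sum_unique by blast
qed (use has_sum_finite_neutralI[of K A f, OF assms] in blast)

lemma transport_plansD:
  assumes "\<pi> \<in> transport_plans K m1 m2"
  shows "0 \<le> \<pi> p" "p \<notin> K \<times> K \<Longrightarrow> \<pi> p = 0"
    "a \<in> K \<Longrightarrow> (\<Sum>b\<in>K. \<pi> (a, b)) = m1 a" "b \<in> K \<Longrightarrow> (\<Sum>a\<in>K. \<pi> (a, b)) = m2 b"
  using assms unfolding transport_plans_def mem_Collect_eq by blast+

lemma prob_on_imp_prob_supported_on:
  assumes "prob_on V m" "finite K" "K \<subseteq> V" "\<And>v. v \<in> V - K \<Longrightarrow> m v = 0"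
  shows "prob_supported_on K m"
proof -
  have "(m has_sum 1) V" "\<And>v. 0 \<le> m v" "\<And>v. v \<notin> V \<Longrightarrow> m v = 0"
    using assms(1) unfolding prob_on_def by auto
  moreover from this(1) have "sum m K = 1"
    using has_sum_finite_support_iff[of K V m, OF assms(2-4)] by simp
  ultimately show ?thesis
    unfolding prob_supported_on_def using assms(4) by auto
qed

lemma transport_cost_has_sum:
  assumes "finite K" "K \<subseteq> V" "\<pi> \<in> transport_plans K m1 m2"
  shows "((\<lambda>(a, b). \<pi> (a, b) * d a b) has_sum transport_cost d K \<pi>) (V \<times> V)"
  unfolding transport_cost_def
proof (subst has_sum_finite_support_iff)
  fix p assume "p \<in> V \<times> V - K \<times> K"
  then show "(case p of (a, b) \<Rightarrow> \<pi> (a, b) * d a b) = 0"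
    using transport_plansD(2)[OF assms(3), of p] by (simp add: case_prod_beta)
qed (use assms in auto)

lemma couplings_eq_transport_plans:
  assumes K: "finite K" "K \<subseteq> V" and m: "prob_supported_on K m1" "prob_supported_on K m2"
  shows "couplings V d m1 m2 = transport_plans K m1 m2"
proof
  show "couplings V d m1 m2 \<subseteq> transport_plans K m1 m2"
  proof
    fix \<pi> assume "\<pi> \<in> couplings V d m1 m2"
    then have nn: "\<And>p. 0 \<le> \<pi> p" and out: "\<And>p. p \<notin> V \<times> V \<Longrightarrow> \<pi> p = 0"
      and row: "\<And>a. a \<in> V \<Longrightarrow> ((\<lambda>b. \<pi> (a, b)) has_sum m1 a) V"
      and col: "\<And>b. b \<in> V \<Longrightarrow> ((\<lambda>a. \<pi> (a, b)) has_sum m2 b) V"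
      unfolding couplings_def by auto
    \<comment> \<open>a row or column outside K carries total mass 0, hence only zero entries\<close>
    have outK: "\<pi> (a, b) = 0" if "(a, b) \<notin> K \<times> K" for a b
    proof (cases "a \<in> V \<and> b \<in> V")
      case True
      show ?thesis
      proof (cases "a \<in> K")
        case False
        then have "((\<lambda>b. \<pi> (a, b)) has_sum 0) V"
          using row[of a] True m(1) unfolding prob_supported_on_def by simp
        then show ?thesis using nonneg_has_sum_le_0D[of "\<lambda>b. \<pi> (a, b)"] True nn by auto
      next
        case True': True
        then have "((\<lambda>a. \<pi> (a, b)) has_sum 0) V"
          using col[of b] True that m(2) unfolding prob_supported_on_def by simp
        then show ?thesis using nonneg_has_sum_le_0D[of "\<lambda>a. \<pi> (a, b)"] True nn by auto
      qed
    qed (use out in auto)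
    have "(\<Sum>b\<in>K. \<pi> (a, b)) = m1 a" if "a \<in> K" for a
      using row[of a] that K outK has_sum_finite_support_iff[OF K, of "\<lambda>b. \<pi> (a, b)"] by auto
    moreover have "(\<Sum>a\<in>K. \<pi> (a, b)) = m2 b" if "b \<in> K" for b
      using col[of b] that K outK has_sum_finite_support_iff[OF K, of "\<lambda>a. \<pi> (a, b)"] by auto
    ultimately show "\<pi> \<in> transport_plans K m1 m2"
      unfolding transport_plans_def using nn outK by auto
  qed
next
  show "transport_plans K m1 m2 \<subseteq> couplings V d m1 m2"
  proof
    fix \<pi> assume \<pi>: "\<pi> \<in> transport_plans K m1 m2"
    note plan = transport_plansD[OF \<pi>]
    have row: "((\<lambda>b. \<pi> (a, b)) has_sum m1 a) V" if "a \<in> V" for a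
      using has_sum_finite_support_iff[OF K, of "\<lambda>b. \<pi> (a, b)"] plan(2,3) m(1)
      by (cases "a \<in> K") (auto simp: prob_supported_on_def sum.neutral)
    have col: "((\<lambda>a. \<pi> (a, b)) has_sum m2 b) V" if "b \<in> V" for b
      using has_sum_finite_support_iff[OF K, of "\<lambda>a. \<pi> (a, b)"] plan(2,4) m(2)
      by (cases "b \<in> K") (auto simp: prob_supported_on_def sum.neutral)
    have "\<pi> p = 0" if "p \<notin> V \<times> V" for p
      using plan(2)[of p] K that by blast
    then show "\<pi> \<in> couplings V d m1 m2"
      unfolding couplings_def using plan(1) row col has_sum_imp_summable[OF transport_cost_has_sum[OF K \<pi>]] by simp
  qed
qed

lemma W1_eq_transport_dist:
  assumes "finite K" "K \<subseteq> V" "prob_supported_on K m1" "prob_supported_on K m2"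
  shows "W1 V d m1 m2 = transport_dist d K m1 m2"
proof -
  have "(\<Sum>\<^sub>\<infinity>(a, b)\<in>V \<times> V. \<pi> (a, b) * d a b) = transport_cost d K \<pi>"
    if "\<pi> \<in> transport_plans K m1 m2" for \<pi>
    using infsumI[OF transport_cost_has_sum[OF assms(1,2) that]] .
  then show ?thesis
    unfolding W1_def transport_dist_def couplings_eq_transport_plans[OF assms]
    by (intro arg_cong[where f=Inf] image_cong refl) simp
qed

lemma product_mem_transport_plans:
  assumes "prob_supported_on K m1" "prob_supported_on K m2"
  shows "(\<lambda>(a, b). m1 a * m2 b) \<in> transport_plans K m1 m2"
  using assms
  by (auto simp: transport_plans_def prob_supported_on_def
      simp flip: sum_distrib_left sum_distrib_right)

lemma transport_plans_nonempty:
  "prob_supported_on K m1 \<Longrightarrow> prob_supported_on K m2 \<Longrightarrow> transport_plans K m1 m2 \<noteq> {}"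
  using product_mem_transport_plans by blast

lemma transport_cost_nonneg:
  "\<pi> \<in> transport_plans K m1 m2 \<Longrightarrow> (\<And>a b. 0 \<le> d a b) \<Longrightarrow> 0 \<le> transport_cost d K \<pi>"
  unfolding transport_cost_def
  by (intro sum_nonneg) (auto intro!: mult_nonneg_nonneg elim: transport_plansD(1))

lemma transport_dist_le_cost:
  "\<pi> \<in> transport_plans K m1 m2 \<Longrightarrow> (\<And>a b. 0 \<le> d a b) \<Longrightarrow> transport_dist d K m1 m2 \<le> transport_cost d K \<pi>"
  unfolding transport_dist_def
  by (rule cInf_lower) (auto intro!: bdd_belowI[where m=0] transport_cost_nonneg)

lemma transport_dist_greatest:
  "transport_plans K m1 m2 \<noteq> {} \<Longrightarrow> (\<And>\<pi>. \<pi> \<in> transport_plans K m1 m2 \<Longrightarrow> c \<le> transport_cost d K \<pi>)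
    \<Longrightarrow> c \<le> transport_dist d K m1 m2"
  unfolding transport_dist_def by (rule cInf_greatest) auto

lemma transport_dist_approx:
  assumes "transport_plans K m1 m2 \<noteq> {}" "\<And>a b. 0 \<le> d a b" "0 < e"
  obtains \<pi> where "\<pi> \<in> transport_plans K m1 m2" "transport_cost d K \<pi> < transport_dist d K m1 m2 + e"
proof -
  have "bdd_below (transport_cost d K ` transport_plans K m1 m2)"
    by (rule bdd_belowI[where m=0]) (auto intro: transport_cost_nonneg assms(2))
  moreover have "Inf (transport_cost d K ` transport_plans K m1 m2) < transport_dist d K m1 m2 + e"
    using assms(3) unfolding transport_dist_def by simp
  ultimately show ?thesis
    using that cInf_less_iff[of "transport_cost d K ` transport_plans K m1 m2"] assms(1)
    by auto
qed

lemma potential_gap_le_transport_cost: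
  assumes "finite K" "\<pi> \<in> transport_plans K m1 m2"
    and lip: "\<And>a b. a \<in> K \<Longrightarrow> b \<in> K \<Longrightarrow> f a - f b \<le> d a b"
  shows "(\<Sum>a\<in>K. m1 a * f a) - (\<Sum>b\<in>K. m2 b * f b) \<le> transport_cost d K \<pi>"
proof -
  note plan = transport_plansD[OF assms(2)]
  have "(\<Sum>a\<in>K. m1 a * f a) = (\<Sum>a\<in>K. \<Sum>b\<in>K. \<pi> (a, b) * f a)"
    using plan(3) by (intro sum.cong refl) (simp flip: sum_distrib_right)
  moreover have "(\<Sum>b\<in>K. m2 b * f b) = (\<Sum>a\<in>K. \<Sum>b\<in>K. \<pi> (a, b) * f b)"
    using plan(4) by (subst sum.swap, intro sum.cong refl) (simp flip: sum_distrib_right)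
  ultimately have "(\<Sum>a\<in>K. m1 a * f a) - (\<Sum>b\<in>K. m2 b * f b)
      = (\<Sum>a\<in>K. \<Sum>b\<in>K. \<pi> (a, b) * (f a - f b))"
    by (simp add: right_diff_distrib sum_subtractf)
  also have "\<dots> \<le> (\<Sum>a\<in>K. \<Sum>b\<in>K. \<pi> (a, b) * d a b)"
    using lip plan(1) by (intro sum_mono mult_left_mono) auto
  finally show ?thesis
    unfolding transport_cost_def sum.cartesian_product .
qed

lemma transport_dist_Dirac:
  assumes "finite K" "x \<in> K" "y \<in> K" "\<And>a b. 0 \<le> d a b" "d y y = 0"
    and tri: "\<And>a b. a \<in> K \<Longrightarrow> b \<in> K \<Longrightarrow> d a y \<le> d a b + d b y"
  shows "transport_dist d K (\<lambda>v. if v = x then 1 else 0) (\<lambda>v. if v = y then 1 else 0) = d x y"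
    (is "transport_dist d K ?\<delta>x ?\<delta>y = _")
proof (rule antisym)
  let ?\<pi> = "\<lambda>p. if p = (x, y) then 1 else 0 :: real"
  have "?\<pi> \<in> transport_plans K ?\<delta>x ?\<delta>y"
    using assms(1-3) by (auto simp: transport_plans_def)
  then have "transport_dist d K ?\<delta>x ?\<delta>y \<le> transport_cost d K ?\<pi>"
    using assms(4) by (rule transport_dist_le_cost)
  also have "transport_cost d K ?\<pi> = (\<Sum>p\<in>K \<times> K. if p = (x, y) then d x y else 0)"
    unfolding transport_cost_def by (intro sum.cong) (auto split: if_splits)
  also have "\<dots> = d x y"
    using assms(1-3) by simp
  finally show "transport_dist d K ?\<delta>x ?\<delta>y \<le> d x y" .
next
  have "prob_supported_on K ?\<delta>x" "prob_supported_on K ?\<delta>y"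
    using assms(1-3) by (auto simp: prob_supported_on_def)
  then show "d x y \<le> transport_dist d K ?\<delta>x ?\<delta>y"
  proof (intro transport_dist_greatest transport_plans_nonempty)
    fix \<pi> assume "\<pi> \<in> transport_plans K ?\<delta>x ?\<delta>y"
    have "(\<Sum>a\<in>K. ?\<delta>x a * d a y) - (\<Sum>b\<in>K. ?\<delta>y b * d b y) \<le> transport_cost d K \<pi>"
      by (rule potential_gap_le_transport_cost[OF assms(1) \<open>\<pi> \<in> _\<close>]) (use tri in force)
    then show "d x y \<le> transport_cost d K \<pi>"
      using assms(1-3,5) by (simp flip: of_bool_def)
  qed
qed

section \<open>Convexity and Lipschitz continuity of the transport distance\<close>

lemma swap_mem_transport_plans:
  "\<pi> \<in> transport_plans K m1 m2 \<Longrightarrow> (\<lambda>(a, b). \<pi> (b, a)) \<in> transport_plans K m2 m1"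
  by (auto simp: transport_plans_def)

lemma transport_dist_commute:
  assumes "\<And>a b. d a b = d b a"
  shows "transport_dist d K m1 m2 = transport_dist d K m2 m1"
proof -
  have cost_swap: "transport_cost d K (\<lambda>(a, b). \<pi> (b, a)) = transport_cost d K \<pi>" for \<pi>
    unfolding transport_cost_def sum.cartesian_product[symmetric]
    by (subst sum.swap) (simp add: assms)
  have "transport_cost d K ` transport_plans K m1 m2 \<subseteq> transport_cost d K ` transport_plans K m2 m1"
    for m1 m2
  proof (rule image_subsetI)
    fix \<pi> assume "\<pi> \<in> transport_plans K m1 m2"
    then show "transport_cost d K \<pi> \<in> transport_cost d K ` transport_plans K m2 m1"
      using swap_mem_transport_plans cost_swap[of \<pi>] by (metis image_eqI)
  qed
  then have "transport_cost d K ` transport_plans K m1 m2 = transport_cost d K ` transport_plans K m2 m1"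
    by (intro subset_antisym)
  then show ?thesis
    unfolding transport_dist_def by simp
qed

lemma lin_comb_mem_transport_plans:
  assumes "\<pi> \<in> transport_plans K m1 m2" "\<sigma> \<in> transport_plans K n1 n2" "0 \<le> s" "0 \<le> t"
  shows "(\<lambda>p. s * \<pi> p + t * \<sigma> p)
    \<in> transport_plans K (\<lambda>v. s * m1 v + t * n1 v) (\<lambda>v. s * m2 v + t * n2 v)"
  using assms
  by (auto simp: transport_plans_def sum.distrib simp flip: sum_distrib_left)

lemma transport_cost_lin_comb:
  "transport_cost d K (\<lambda>p. s * \<pi> p + t * \<sigma> p) = s * transport_cost d K \<pi> + t * transport_cost d K \<sigma>"
  unfolding transport_cost_def
  by (simp add: case_prod_beta distrib_right sum.distrib sum_distrib_left mult.assoc)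

lemma transport_dist_convex:
  assumes "prob_supported_on K m1" "prob_supported_on K m2"
    "prob_supported_on K n1" "prob_supported_on K n2" "0 \<le> t" "t \<le> 1"
    and nonneg: "\<And>a b. 0 \<le> d a b"
  shows "transport_dist d K (\<lambda>v. (1 - t) * m1 v + t * n1 v) (\<lambda>v. (1 - t) * m2 v + t * n2 v)
     \<le> (1 - t) * transport_dist d K m1 m2 + t * transport_dist d K n1 n2"
proof (rule field_le_epsilon)
  fix e :: real assume "0 < e"
  obtain \<pi> where \<pi>: "\<pi> \<in> transport_plans K m1 m2"
      "transport_cost d K \<pi> < transport_dist d K m1 m2 + e"
    by (rule transport_dist_approx[OF transport_plans_nonempty[OF assms(1,2)] nonneg \<open>0 < e\<close>])
  obtain \<sigma> where \<sigma>: "\<sigma> \<in> transport_plans K n1 n2"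
      "transport_cost d K \<sigma> < transport_dist d K n1 n2 + e"
    by (rule transport_dist_approx[OF transport_plans_nonempty[OF assms(3,4)] nonneg \<open>0 < e\<close>])
  have "transport_dist d K (\<lambda>v. (1 - t) * m1 v + t * n1 v) (\<lambda>v. (1 - t) * m2 v + t * n2 v)
      \<le> (1 - t) * transport_cost d K \<pi> + t * transport_cost d K \<sigma>"
    using transport_dist_le_cost[OF lin_comb_mem_transport_plans[OF \<pi>(1) \<sigma>(1)] nonneg] assms(5,6)
    by (simp add: transport_cost_lin_comb)
  also have "\<dots> \<le> (1 - t) * (transport_dist d K m1 m2 + e) + t * (transport_dist d K n1 n2 + e)"
    using \<pi>(2) \<sigma>(2) assms(5,6) by (intro add_mono mult_left_mono) auto
  finally show "transport_dist d K (\<lambda>v. (1 - t) * m1 v + t * n1 v) (\<lambda>v. (1 - t) * m2 v + t * n2 v)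
      \<le> (1 - t) * transport_dist d K m1 m2 + t * transport_dist d K n1 n2 + e"
    by (simp add: algebra_simps)
qed

lemma scaled_product_mem_transport_plans:
  assumes K: "finite K" and e: "\<And>v. 0 \<le> e v" "\<And>v. v \<notin> K \<Longrightarrow> e v = 0" "sum e K = s"
    and g: "\<And>v. 0 \<le> g v" "\<And>v. v \<notin> K \<Longrightarrow> g v = 0" "sum g K = s"
  shows "(\<lambda>(a, b). e a * g b / s) \<in> transport_plans K e g"
proof -
  \<comment> \<open>if s = 0 then e and g vanish, so the junk value of division by 0 does no harm\<close>
  have "e a * s / s = e a" "g a * s / s = g a" for a
    using sum_nonneg_eq_0_iff[OF K, of e] sum_nonneg_eq_0_iff[OF K, of g] e g
    by (cases "s = 0"; cases "a \<in> K"; auto)+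
  moreover have "0 \<le> e a * g b / s" for a b
    using e g sum_nonneg[of K e] by simp
  ultimately show ?thesis
    using e g by (auto simp: transport_plans_def simp flip: sum_divide_distrib sum_distrib_left
        sum_distrib_right)
qed

lemma transport_cost_scaled_product_le:
  assumes "\<And>v. 0 \<le> e v" "sum e K = s" "\<And>v. 0 \<le> g v" "sum g K = s"
    and D: "\<And>a b. a \<in> K \<Longrightarrow> b \<in> K \<Longrightarrow> d a b \<le> D"
  shows "transport_cost d K (\<lambda>(a, b). e a * g b / s) \<le> D * s"
proof -
  have "0 \<le> s"
    using assms(1,2) sum_nonneg[of K e] by simp
  then have "e a * g b / s * d a b \<le> D / s * (e a * g b)" if "a \<in> K" "b \<in> K" for a b
    using mult_left_mono[OF D[OF that], of "e a * g b / s"] assms(1,3) by (simp add: mult_ac)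
  then have "transport_cost d K (\<lambda>(a, b). e a * g b / s) \<le> (\<Sum>(a, b)\<in>K \<times> K. D / s * (e a * g b))"
    unfolding transport_cost_def by (intro sum_mono) auto
  also have "\<dots> = D / s * (sum e K * sum g K)"
    unfolding sum_product by (simp only: sum.cartesian_product[symmetric] sum_distrib_left)
  also have "\<dots> = D * s"
    using assms(2,4) by (cases "s = 0") auto
  finally show ?thesis .
qed

lemma subplan_completion:
  assumes K: "finite K" and m: "prob_supported_on K m1" "prob_supported_on K m2"
    and \<rho>: "\<And>p. 0 \<le> \<rho> p" "\<And>p. p \<notin> K \<times> K \<Longrightarrow> \<rho> p = 0"
    and rows: "\<And>a. a \<in> K \<Longrightarrow> (\<Sum>b\<in>K. \<rho> (a, b)) \<le> m1 a"
    and cols: "\<And>b. b \<in> K \<Longrightarrow> (\<Sum>a\<in>K. \<rho> (a, b)) \<le> m2 b"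
    and D: "\<And>a b. a \<in> K \<Longrightarrow> b \<in> K \<Longrightarrow> d a b \<le> D"
  obtains \<pi> where "\<pi> \<in> transport_plans K m1 m2"
    "transport_cost d K \<pi> \<le> transport_cost d K \<rho> + D * (1 - (\<Sum>p\<in>K \<times> K. \<rho> p))"
proof -
  define r where "r a = (\<Sum>b\<in>K. \<rho> (a, b))" for a
  define c where "c b = (\<Sum>a\<in>K. \<rho> (a, b))" for b
  define s where "s = 1 - (\<Sum>p\<in>K \<times> K. \<rho> p)"
  define \<sigma> where "\<sigma> = (\<lambda>(a, b). (m1 a - r a) * (m2 b - c b) / s)"
  have m1: "\<And>v. 0 \<le> m1 v" "\<And>v. v \<notin> K \<Longrightarrow> m1 v = 0" "sum m1 K = 1"
    and m2: "\<And>v. 0 \<le> m2 v" "\<And>v. v \<notin> K \<Longrightarrow> m2 v = 0" "sum m2 K = 1"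
    using m unfolding prob_supported_on_def by auto
  have "sum r K = (\<Sum>p\<in>K \<times> K. \<rho> p)"
    unfolding r_def by (simp add: sum.cartesian_product)
  moreover have "sum c K = (\<Sum>p\<in>K \<times> K. \<rho> p)"
    unfolding c_def by (subst sum.swap) (simp add: sum.cartesian_product)
  ultimately have "sum r K = 1 - s" "sum c K = 1 - s"
    unfolding s_def by simp_all
  then have defects: "sum (\<lambda>a. m1 a - r a) K = s" "sum (\<lambda>b. m2 b - c b) K = s"
    using m1(3) m2(3) by (simp_all add: sum_subtractf)
  have r_out: "r a = 0" if "a \<notin> K" for a
    unfolding r_def using \<rho>(2) that by simp
  have c_out: "c b = 0" if "b \<notin> K" for b
    unfolding c_def using \<rho>(2) that by simp
  have defects_nonneg: "0 \<le> m1 a - r a" "0 \<le> m2 a - c a" for a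
    using rows[of a] cols[of a] r_out[of a] c_out[of a] m1(2)[of a] m2(2)[of a]
    unfolding r_def c_def by (cases "a \<in> K"; simp)+
  have \<rho>_plan: "\<rho> \<in> transport_plans K r c"
    unfolding transport_plans_def r_def c_def using \<rho> by auto
  moreover have \<sigma>_plan: "\<sigma> \<in> transport_plans K (\<lambda>a. m1 a - r a) (\<lambda>b. m2 b - c b)"
    unfolding \<sigma>_def using K defects defects_nonneg m1(2) m2(2) r_out c_out
    by (intro scaled_product_mem_transport_plans) auto
  ultimately have "(\<lambda>p. 1 * \<rho> p + 1 * \<sigma> p) \<in> transport_plans K m1 m2"
    using lin_comb_mem_transport_plans[OF \<rho>_plan \<sigma>_plan, of 1 1] by simp
  moreover have "transport_cost d K \<sigma> \<le> D * s"
    unfolding \<sigma>_def using defects defects_nonneg D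
    by (intro transport_cost_scaled_product_le) auto
  ultimately show ?thesis
    using that[of "\<lambda>p. 1 * \<rho> p + 1 * \<sigma> p"] unfolding transport_cost_lin_comb s_def by simp
qed

lemma transport_plan_change_first_marginal:
  assumes K: "finite K" and m: "prob_supported_on K m1" "prob_supported_on K n1" "prob_supported_on K m2"
    and \<pi>: "\<pi> \<in> transport_plans K n1 m2"
    and nonneg: "\<And>a b. 0 \<le> d a b" and D: "\<And>a b. a \<in> K \<Longrightarrow> b \<in> K \<Longrightarrow> d a b \<le> D"
  obtains \<pi>' where "\<pi>' \<in> transport_plans K m1 m2"
    "transport_cost d K \<pi>' \<le> transport_cost d K \<pi> + D * (\<Sum>v\<in>K. \<bar>m1 v - n1 v\<bar>)"
proof -
  note plan = transport_plansD[OF \<pi>]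
  have m1: "\<And>v. 0 \<le> m1 v" "sum m1 K = 1" and n1: "\<And>v. 0 \<le> n1 v"
    using m unfolding prob_supported_on_def by auto
  obtain k where "k \<in> K"
    using m1(2) by fastforce
  then have "0 \<le> D"
    using nonneg[of k k] D[of k k] by linarith
  \<comment> \<open>keep from each row of \<pi> the fraction of mass that m1 and n1 have in common\<close>
  define q where "q a = min (m1 a) (n1 a) / n1 a" for a
  define \<rho> where "\<rho> p = \<pi> p * q (fst p)" for p
  have q: "0 \<le> q a" "q a \<le> 1" "n1 a * q a = min (m1 a) (n1 a)" for a
    using m1(1)[of a] n1[of a] unfolding q_def by (cases "n1 a = 0"; simp)+
  have rows: "(\<Sum>b\<in>K. \<rho> (a, b)) = min (m1 a) (n1 a)" if "a \<in> K" for a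
    unfolding \<rho>_def using plan(3)[OF that] q(3)[of a] by (simp flip: sum_distrib_right)
  have le_\<pi>: "\<rho> p \<le> \<pi> p" for p
    unfolding \<rho>_def using plan(1) q(2) by (simp add: mult_left_le)
  obtain \<pi>' where \<pi>': "\<pi>' \<in> transport_plans K m1 m2"
    "transport_cost d K \<pi>' \<le> transport_cost d K \<rho> + D * (1 - (\<Sum>p\<in>K \<times> K. \<rho> p))"
  proof (rule subplan_completion[OF K m(1,3) _ _ _ _ D])
    show "0 \<le> \<rho> p" for p
      unfolding \<rho>_def using plan(1) q(1) by simp
    show "\<rho> p = 0" if "p \<notin> K \<times> K" for p
      unfolding \<rho>_def using plan(2)[OF that] by simp
    show "(\<Sum>b\<in>K. \<rho> (a, b)) \<le> m1 a" if "a \<in> K" for a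
      using rows[OF that] by simp
    show "(\<Sum>a\<in>K. \<rho> (a, b)) \<le> m2 b" if "b \<in> K" for b
      using plan(4)[OF that] sum_mono[of K "\<lambda>a. \<rho> (a, b)" "\<lambda>a. \<pi> (a, b)"] le_\<pi> by simp
  qed
  have "transport_cost d K \<rho> \<le> transport_cost d K \<pi>"
    unfolding transport_cost_def using le_\<pi> nonneg
    by (intro sum_mono) (auto intro: mult_right_mono)
  moreover have "(\<Sum>p\<in>K \<times> K. \<rho> p) = (\<Sum>a\<in>K. \<Sum>b\<in>K. \<rho> (a, b))"
    by (simp add: sum.cartesian_product)
  then have "1 - (\<Sum>p\<in>K \<times> K. \<rho> p) = (\<Sum>a\<in>K. m1 a - min (m1 a) (n1 a))"
    using rows m1(2) by (simp add: sum_subtractf)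
  then have "D * (1 - (\<Sum>p\<in>K \<times> K. \<rho> p)) \<le> D * (\<Sum>v\<in>K. \<bar>m1 v - n1 v\<bar>)"
    using \<open>0 \<le> D\<close> by (auto intro!: mult_left_mono sum_mono)
  ultimately show ?thesis
    using that[OF \<pi>'(1)] \<pi>'(2) by linarith
qed

lemma transport_dist_le_l1_first:
  assumes K: "finite K" and m: "prob_supported_on K m1" "prob_supported_on K n1" "prob_supported_on K m2"
    and nonneg: "\<And>a b. 0 \<le> d a b" and D: "\<And>a b. a \<in> K \<Longrightarrow> b \<in> K \<Longrightarrow> d a b \<le> D"
  shows "transport_dist d K m1 m2 \<le> transport_dist d K n1 m2 + D * (\<Sum>v\<in>K. \<bar>m1 v - n1 v\<bar>)"
proof -
  have "transport_dist d K m1 m2 - D * (\<Sum>v\<in>K. \<bar>m1 v - n1 v\<bar>) \<le> transport_dist d K n1 m2"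
  proof (rule transport_dist_greatest[OF transport_plans_nonempty[OF m(2,3)]])
    fix \<pi> assume "\<pi> \<in> transport_plans K n1 m2"
    then obtain \<pi>' where \<pi>': "\<pi>' \<in> transport_plans K m1 m2"
      "transport_cost d K \<pi>' \<le> transport_cost d K \<pi> + D * (\<Sum>v\<in>K. \<bar>m1 v - n1 v\<bar>)"
      using transport_plan_change_first_marginal[where d=d, OF K m _ nonneg D] by blast
    then show "transport_dist d K m1 m2 - D * (\<Sum>v\<in>K. \<bar>m1 v - n1 v\<bar>) \<le> transport_cost d K \<pi>"
      using transport_dist_le_cost[where d=d, OF \<pi>'(1) nonneg] \<pi>'(2) by linarith
  qed
  then show ?thesis
    by linarith
qed

lemma transport_dist_lipschitz:
  assumes K: "finite K" and m: "prob_supported_on K m1" "prob_supported_on K m2"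
    and n: "prob_supported_on K n1" "prob_supported_on K n2"
    and nonneg: "\<And>a b. 0 \<le> d a b" and sym: "\<And>a b. d a b = d b a"
    and D: "\<And>a b. a \<in> K \<Longrightarrow> b \<in> K \<Longrightarrow> d a b \<le> D"
  shows "\<bar>transport_dist d K m1 m2 - transport_dist d K n1 n2\<bar>
    \<le> D * ((\<Sum>v\<in>K. \<bar>m1 v - n1 v\<bar>) + (\<Sum>v\<in>K. \<bar>m2 v - n2 v\<bar>))"
proof -
  have one_side: "transport_dist d K p1 p2
      \<le> transport_dist d K q1 q2 + D * ((\<Sum>v\<in>K. \<bar>p1 v - q1 v\<bar>) + (\<Sum>v\<in>K. \<bar>p2 v - q2 v\<bar>))"
    if "prob_supported_on K p1" "prob_supported_on K p2"
      "prob_supported_on K q1" "prob_supported_on K q2" for p1 p2 q1 q2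
  proof -
    have "transport_dist d K p1 p2 \<le> transport_dist d K q1 p2 + D * (\<Sum>v\<in>K. \<bar>p1 v - q1 v\<bar>)"
      using transport_dist_le_l1_first[OF K that(1,3,2) nonneg D] .
    also have "transport_dist d K q1 p2 = transport_dist d K p2 q1"
      using transport_dist_commute[OF sym] .
    also have "\<dots> \<le> transport_dist d K q2 q1 + D * (\<Sum>v\<in>K. \<bar>p2 v - q2 v\<bar>)"
      using transport_dist_le_l1_first[OF K that(2,4,3) nonneg D] .
    also have "transport_dist d K q2 q1 = transport_dist d K q1 q2"
      using transport_dist_commute[OF sym] .
    finally show ?thesis
      by (simp add: algebra_simps)
  qed
  show ?thesis
    using one_side[OF m n] one_side[OF n m] by (simp add: abs_minus_commute abs_le_iff)
qed

section \<open>Right derivatives at time 0\<close>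

lemma real_analytic_on_imp_DERIV:
  assumes "real_analytic_on f S" "x \<in> S"
  shows "\<exists>D. (f has_real_derivative D) (at x)"
proof -
  obtain r a where r: "r > 0" and ps: "\<And>t. \<bar>t - x\<bar> < r \<Longrightarrow> (\<lambda>n. a n * (t - x) ^ n) sums f t"
    using assms unfolding real_analytic_on_def by blast
  define g where "g h = (\<Sum>n. a n * h ^ n)" for h :: real
  have "summable (\<lambda>n. a n * (r / 2) ^ n)"
    using ps[of "x + r / 2"] r by (auto intro: sums_summable)
  then have "(g has_real_derivative (\<Sum>n. diffs a n * 0 ^ n)) (at 0)"
    unfolding g_def by (rule termdiffs_strong) (use r in simp)
  then have "(g has_real_derivative (\<Sum>n. diffs a n * 0 ^ n)) (at (x - x))"
    by simp
  then have "((\<lambda>t. g (t - x)) has_real_derivative (\<Sum>n. diffs a n * 0 ^ n) * 1) (at x)"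
    by (rule DERIV_chain2) (rule DERIV_diff[OF DERIV_ident DERIV_const, simplified])
  then have "(f has_real_derivative (\<Sum>n. diffs a n * 0 ^ n) * 1) (at x)"
  proof (rule has_field_derivative_transform_within_open[where S="{x - r<..<x + r}"])
    show "g (t - x) = f t" if "t \<in> {x - r<..<x + r}" for t
      using ps[of t] that unfolding g_def by (auto simp: sums_iff abs_less_iff)
  qed (use r in auto)
  then show ?thesis ..
qed

lemma time_analytic_right_derivative:
  assumes "time_analytic V mu" "z \<in> V" "v \<in> V"
  shows "\<exists>B. ((\<lambda>\<epsilon>. (mu z \<epsilon> v - mu z 0 v) / \<epsilon>) \<longlongrightarrow> B) (at_right 0)"
proof -
  obtain \<delta> f where "\<delta> > 0" and an: "real_analytic_on f {-\<delta><..<1+\<delta>}"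
    and f: "\<forall>\<epsilon>\<in>{0..1}. f \<epsilon> = mu z \<epsilon> v"
    using assms unfolding time_analytic_def by blast
  then obtain B where "(f has_real_derivative B) (at 0)"
    using real_analytic_on_imp_DERIV[OF an, of 0] by auto
  then have "(f has_real_derivative B) (at 0 within {0<..})"
    by (rule has_field_derivative_at_within)
  then have "((\<lambda>\<epsilon>. (f \<epsilon> - f 0) / \<epsilon>) \<longlongrightarrow> B) (at_right 0)"
    by (simp add: has_field_derivative_iff)
  moreover have "\<forall>\<^sub>F \<epsilon> in at_right 0. (f \<epsilon> - f 0) / \<epsilon> = (mu z \<epsilon> v - mu z 0 v) / \<epsilon>"
    unfolding eventually_at_right_field using f by (intro exI[of _ 1]) auto
  ultimately have "((\<lambda>\<epsilon>. (mu z \<epsilon> v - mu z 0 v) / \<epsilon>) \<longlongrightarrow> B) (at_right 0)"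
    by (rule Lim_transform_eventually)
  then show ?thesis ..
qed

lemma time_analytic_rates:
  assumes "time_analytic V mu" "z \<in> V" "K \<subseteq> V"
  obtains B where "\<And>v. v \<in> K \<Longrightarrow> ((\<lambda>\<epsilon>. (mu z \<epsilon> v - mu z 0 v) / \<epsilon>) \<longlongrightarrow> B v) (at_right 0)"
    "\<And>v. v \<notin> K \<Longrightarrow> B v = 0"
proof -
  have "\<forall>v\<in>K. \<exists>B. ((\<lambda>\<epsilon>. (mu z \<epsilon> v - mu z 0 v) / \<epsilon>) \<longlongrightarrow> B) (at_right 0)"
    using time_analytic_right_derivative[OF assms(1,2)] assms(3) by blast
  then obtain B where "\<forall>v\<in>K. ((\<lambda>\<epsilon>. (mu z \<epsilon> v - mu z 0 v) / \<epsilon>) \<longlongrightarrow> B v) (at_right 0)"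
    by (rule bchoice[THEN exE])
  then show ?thesis
    using that[of "\<lambda>v. if v \<in> K then B v else 0"] by simp
qed

lemma convex_on_right_slope_limit:
  fixes \<phi> :: "real \<Rightarrow> real"
  assumes "convex_on {0..b} \<phi>" "0 < b"
    and bounded: "\<And>t. 0 < t \<Longrightarrow> t \<le> b \<Longrightarrow> C \<le> (\<phi> t - \<phi> 0) / t"
  shows "\<exists>S. ((\<lambda>t. (\<phi> t - \<phi> 0) / t) \<longlongrightarrow> S) (at_right 0)"
proof -
  have "(\<phi> s - \<phi> 0) / s \<le> (\<phi> t - \<phi> 0) / t" if "0 < s" "s \<le> t" "t \<le> b" for s t
  proof (cases "s = t")
    case False
    then have "(\<phi> 0 - \<phi> s) / (0 - s) \<le> (\<phi> 0 - \<phi> t) / (0 - t)"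
      using that by (intro convex_on_slope_le(1)[OF assms(1)]) auto
    then show ?thesis
      by (metis diff_0 minus_diff_eq minus_divide_divide)
  qed simp
  then have "((\<lambda>t. (\<phi> t - \<phi> 0) / t) \<longlongrightarrow> Inf ((\<lambda>t. (\<phi> t - \<phi> 0) / t) ` ({0<..} \<inter> {..b})))
      (at 0 within ({0<..} \<inter> {..b}))"
    using bounded by (intro Lim_right_bound) auto
  moreover have "at 0 within ({0<..} \<inter> {..b}) = at_right (0::real)"
    using \<open>0 < b\<close> by (intro at_within_nhd[where S="{..<b}"]) auto
  ultimately show ?thesis
    by (intro exI) simp
qed

lemma eventually_nonneg_tangent:
  fixes f :: "real \<Rightarrow> real"
  assumes nonneg: "\<And>\<epsilon>. \<epsilon> \<in> {0..1} \<Longrightarrow> 0 \<le> f \<epsilon>"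
    and B: "((\<lambda>\<epsilon>. (f \<epsilon> - f 0) / \<epsilon>) \<longlongrightarrow> B) (at_right 0)"
  shows "\<forall>\<^sub>F t in at_right 0. 0 \<le> f 0 + t * B"
proof (cases "f 0 = 0")
  case True
  have "\<forall>\<^sub>F \<epsilon> in at_right 0. 0 \<le> (f \<epsilon> - f 0) / \<epsilon>"
    unfolding eventually_at_right_field using nonneg True by (intro exI[of _ 1]) auto
  then have "0 \<le> B"
    using B by (intro tendsto_lowerbound) auto
  then show ?thesis
    using True by (intro eventually_mono[OF eventually_at_right_less]) (simp add: zero_le_mult_iff)
next
  case False
  then have "0 < f 0"
    using nonneg[of 0] by simp
  moreover have "((\<lambda>t. f 0 + t * B) \<longlongrightarrow> f 0 + 0 * B) (at_right 0)"
    by (intro tendsto_intros)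
  ultimately have "\<forall>\<^sub>F t in at_right 0. 0 < f 0 + t * B"
    using order_tendstoD(1) by fastforce
  then show ?thesis
    by (rule eventually_mono) simp
qed

lemma sum_right_derivatives_eq_0:
  fixes m :: "real \<Rightarrow> 'v \<Rightarrow> real"
  assumes K: "finite K" and m: "\<And>\<epsilon>. \<epsilon> \<in> {0..1} \<Longrightarrow> prob_supported_on K (m \<epsilon>)"
    and B: "\<And>v. v \<in> K \<Longrightarrow> ((\<lambda>\<epsilon>. (m \<epsilon> v - m 0 v) / \<epsilon>) \<longlongrightarrow> B v) (at_right 0)"
  shows "sum B K = 0"
proof -
  have "((\<lambda>\<epsilon>. \<Sum>v\<in>K. (m \<epsilon> v - m 0 v) / \<epsilon>) \<longlongrightarrow> sum B K) (at_right 0)"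
    using B by (intro tendsto_sum) auto
  moreover have "\<forall>\<^sub>F \<epsilon> in at_right 0. (\<Sum>v\<in>K. (m \<epsilon> v - m 0 v) / \<epsilon>) = 0"
  proof -
    have "(\<Sum>v\<in>K. (m \<epsilon> v - m 0 v) / \<epsilon>) = 0" if "\<epsilon> \<in> {0..1}" for \<epsilon>
      using m[OF that] m[of 0] unfolding prob_supported_on_def
      by (simp add: sum_divide_distrib[symmetric] sum_subtractf)
    then show ?thesis
      unfolding eventually_at_right_field by (intro exI[of _ 1]) auto
  qed
  ultimately have "((\<lambda>\<epsilon>. 0) \<longlongrightarrow> sum B K) (at_right (0::real))"
    by (rule Lim_transform_eventually)
  then show ?thesis
    by (simp add: tendsto_const_iff)
qed

lemma linearization_prob_supported_on:
  fixes m :: "real \<Rightarrow> 'v \<Rightarrow> real"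
  assumes K: "finite K" and m: "\<And>\<epsilon>. \<epsilon> \<in> {0..1} \<Longrightarrow> prob_supported_on K (m \<epsilon>)"
    and B: "\<And>v. v \<in> K \<Longrightarrow> ((\<lambda>\<epsilon>. (m \<epsilon> v - m 0 v) / \<epsilon>) \<longlongrightarrow> B v) (at_right 0)"
      "\<And>v. v \<notin> K \<Longrightarrow> B v = 0"
  shows "\<exists>b>0. \<forall>t\<in>{0..b}. prob_supported_on K (\<lambda>v. m 0 v + t * B v)"
proof -
  have m0: "\<And>v. 0 \<le> m 0 v" "\<And>v. v \<notin> K \<Longrightarrow> m 0 v = 0" "sum (m 0) K = 1"
    using m[of 0] unfolding prob_supported_on_def by auto
  have "\<forall>v\<in>K. \<forall>\<^sub>F t in at_right 0. 0 \<le> m 0 v + t * B v"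
    using m B(1) unfolding prob_supported_on_def by (intro ballI eventually_nonneg_tangent) auto
  then have "\<forall>\<^sub>F t in at_right 0. \<forall>v\<in>K. 0 \<le> m 0 v + t * B v"
    by (rule eventually_ball_finite[OF K])
  then obtain b where "b > 0" and b: "\<And>t v. 0 < t \<Longrightarrow> t < b \<Longrightarrow> v \<in> K \<Longrightarrow> 0 \<le> m 0 v + t * B v"
    unfolding eventually_at_right_field by auto
  have "prob_supported_on K (\<lambda>v. m 0 v + t * B v)" if "t \<in> {0..b / 2}" for t
    unfolding prob_supported_on_def
  proof (intro conjI allI impI)
    show "0 \<le> m 0 v + t * B v" for v
      using b[of t v] m0(1,2)[of v] B(2)[of v] that \<open>b > 0\<close> by (cases "t = 0 \<or> v \<notin> K") auto
    show "m 0 v + t * B v = 0" if "v \<notin> K" for v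
      using m0(2) B(2) that by simp
    show "(\<Sum>v\<in>K. m 0 v + t * B v) = 1"
      using m0(3) sum_right_derivatives_eq_0[OF K m B(1)] by (simp add: sum.distrib flip: sum_distrib_left)
  qed
  then show ?thesis
    using \<open>b > 0\<close> by (intro exI[of _ "b / 2"]) auto
qed

lemma linearization_l1_error:
  fixes m :: "real \<Rightarrow> 'v \<Rightarrow> real"
  assumes "finite K" "\<And>v. v \<in> K \<Longrightarrow> ((\<lambda>\<epsilon>. (m \<epsilon> v - m 0 v) / \<epsilon>) \<longlongrightarrow> B v) (at_right 0)"
  shows "((\<lambda>\<epsilon>. (\<Sum>v\<in>K. \<bar>m \<epsilon> v - (m 0 v + \<epsilon> * B v)\<bar>) / \<epsilon>) \<longlongrightarrow> 0) (at_right 0)"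
proof -
  have "((\<lambda>\<epsilon>. \<Sum>v\<in>K. \<bar>(m \<epsilon> v - m 0 v) / \<epsilon> - B v\<bar>) \<longlongrightarrow> (\<Sum>v\<in>K. \<bar>B v - B v\<bar>)) (at_right 0)"
    by (intro tendsto_sum tendsto_rabs tendsto_diff tendsto_const assms(2))
  moreover have "\<forall>\<^sub>F \<epsilon> in at_right 0.
      (\<Sum>v\<in>K. \<bar>(m \<epsilon> v - m 0 v) / \<epsilon> - B v\<bar>) = (\<Sum>v\<in>K. \<bar>m \<epsilon> v - (m 0 v + \<epsilon> * B v)\<bar>) / \<epsilon>"
  proof (rule eventually_mono[OF eventually_at_right_less])
    fix \<epsilon> :: real assume "0 < \<epsilon>"
    then have "\<bar>(m \<epsilon> v - m 0 v) / \<epsilon> - B v\<bar> = \<bar>m \<epsilon> v - (m 0 v + \<epsilon> * B v)\<bar> / \<epsilon>" for v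
      by (simp add: field_simps)
    then show "(\<Sum>v\<in>K. \<bar>(m \<epsilon> v - m 0 v) / \<epsilon> - B v\<bar>) = (\<Sum>v\<in>K. \<bar>m \<epsilon> v - (m 0 v + \<epsilon> * B v)\<bar>) / \<epsilon>"
      by (simp add: sum_divide_distrib)
  qed
  ultimately show ?thesis
    by (simp add: Lim_transform_eventually)
qed

section \<open>Differentiability of the transport distance along the walks\<close>

lemma transport_dist_affine_path_right_differentiable:
  fixes a1 a2 B1 B2 :: "'v \<Rightarrow> real"
  assumes K: "finite K" and nonneg: "\<And>a b. 0 \<le> d a b" and sym: "\<And>a b. d a b = d b a"
    and "0 < b"
    and p1: "\<And>t. t \<in> {0..b} \<Longrightarrow> prob_supported_on K (\<lambda>v. a1 v + t * B1 v)"
    and p2: "\<And>t. t \<in> {0..b} \<Longrightarrow> prob_supported_on K (\<lambda>v. a2 v + t * B2 v)"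
  shows "\<exists>S. ((\<lambda>t. (transport_dist d K (\<lambda>v. a1 v + t * B1 v) (\<lambda>v. a2 v + t * B2 v)
      - transport_dist d K a1 a2) / t) \<longlongrightarrow> S) (at_right 0)"
proof -
  define \<phi> where "\<phi> t = transport_dist d K (\<lambda>v. a1 v + t * B1 v) (\<lambda>v. a2 v + t * B2 v)" for t
  obtain D where D: "\<And>a b. a \<in> K \<Longrightarrow> b \<in> K \<Longrightarrow> d a b \<le> D"
    using bdd_above_finite[of "case_prod d ` (K \<times> K)"] K unfolding bdd_above_def by auto
  have convex: "convex_on {0..b} \<phi>"
  proof (rule convex_onI)
    fix u s t :: real assume u: "0 < u" "u < 1" and st: "s \<in> {0..b}" "t \<in> {0..b}"
    have path: "(\<lambda>v. a v + ((1 - u) *\<^sub>R s + u *\<^sub>R t) * B v)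
        = (\<lambda>v. (1 - u) * (a v + s * B v) + u * (a v + t * B v))" for a B :: "'v \<Rightarrow> real"
      by (simp add: algebra_simps)
    show "\<phi> ((1 - u) *\<^sub>R s + u *\<^sub>R t) \<le> (1 - u) * \<phi> s + u * \<phi> t"
      unfolding \<phi>_def path using u by (intro transport_dist_convex p1 p2 st nonneg) auto
  qed simp
  have slope_bound: "- (D * ((\<Sum>v\<in>K. \<bar>B1 v\<bar>) + (\<Sum>v\<in>K. \<bar>B2 v\<bar>))) \<le> (\<phi> t - \<phi> 0) / t"
    if "0 < t" "t \<le> b" for t
  proof -
    have "\<bar>\<phi> t - \<phi> 0\<bar> \<le> D * ((\<Sum>v\<in>K. \<bar>(a1 v + t * B1 v) - (a1 v + 0 * B1 v)\<bar>)
        + (\<Sum>v\<in>K. \<bar>(a2 v + t * B2 v) - (a2 v + 0 * B2 v)\<bar>))"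
      unfolding \<phi>_def using that by (intro transport_dist_lipschitz p1 p2 nonneg sym D K) auto
    also have "\<dots> = t * (D * ((\<Sum>v\<in>K. \<bar>B1 v\<bar>) + (\<Sum>v\<in>K. \<bar>B2 v\<bar>)))"
      using that by (simp add: abs_mult sum_distrib_left algebra_simps)
    finally show ?thesis
      using that by (simp add: le_divide_eq abs_le_iff mult_ac)
  qed
  have "\<exists>S. ((\<lambda>t. (\<phi> t - \<phi> 0) / t) \<longlongrightarrow> S) (at_right 0)"
    by (rule convex_on_right_slope_limit[OF convex \<open>0 < b\<close> slope_bound])
  then show ?thesis
    by (simp add: \<phi>_def)
qed

lemma transport_dist_linearization_error:
  fixes m1 m2 :: "real \<Rightarrow> 'v \<Rightarrow> real"
  assumes K: "finite K" and nonneg: "\<And>a b. 0 \<le> d a b" and sym: "\<And>a b. d a b = d b a"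
    and m1: "\<And>\<epsilon>. \<epsilon> \<in> {0..1} \<Longrightarrow> prob_supported_on K (m1 \<epsilon>)"
    and m2: "\<And>\<epsilon>. \<epsilon> \<in> {0..1} \<Longrightarrow> prob_supported_on K (m2 \<epsilon>)"
    and "0 < b"
    and p1: "\<And>t. t \<in> {0..b} \<Longrightarrow> prob_supported_on K (\<lambda>v. m1 0 v + t * B1 v)"
    and p2: "\<And>t. t \<in> {0..b} \<Longrightarrow> prob_supported_on K (\<lambda>v. m2 0 v + t * B2 v)"
    and B1: "\<And>v. v \<in> K \<Longrightarrow> ((\<lambda>\<epsilon>. (m1 \<epsilon> v - m1 0 v) / \<epsilon>) \<longlongrightarrow> B1 v) (at_right 0)"
    and B2: "\<And>v. v \<in> K \<Longrightarrow> ((\<lambda>\<epsilon>. (m2 \<epsilon> v - m2 0 v) / \<epsilon>) \<longlongrightarrow> B2 v) (at_right 0)"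
  shows "((\<lambda>\<epsilon>. (transport_dist d K (m1 \<epsilon>) (m2 \<epsilon>)
      - transport_dist d K (\<lambda>v. m1 0 v + \<epsilon> * B1 v) (\<lambda>v. m2 0 v + \<epsilon> * B2 v)) / \<epsilon>) \<longlongrightarrow> 0) (at_right 0)"
proof -
  obtain D where D: "\<And>a b. a \<in> K \<Longrightarrow> b \<in> K \<Longrightarrow> d a b \<le> D"
    using bdd_above_finite[of "case_prod d ` (K \<times> K)"] K unfolding bdd_above_def by auto
  define err where "err m B \<epsilon> = (\<Sum>v\<in>K. \<bar>m \<epsilon> v - (m 0 v + \<epsilon> * B v)\<bar>) / \<epsilon>"
    for m :: "real \<Rightarrow> 'v \<Rightarrow> real" and B \<epsilon>
  have lim: "((\<lambda>\<epsilon>. D * (err m1 B1 \<epsilon> + err m2 B2 \<epsilon>)) \<longlongrightarrow> 0) (at_right 0)"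
    unfolding err_def
    using tendsto_add[OF linearization_l1_error[OF K B1] linearization_l1_error[OF K B2]]
    by (auto intro: tendsto_mult_right_zero)
  have "\<bar>transport_dist d K (m1 \<epsilon>) (m2 \<epsilon>)
      - transport_dist d K (\<lambda>v. m1 0 v + \<epsilon> * B1 v) (\<lambda>v. m2 0 v + \<epsilon> * B2 v)\<bar> / \<epsilon>
      \<le> D * (err m1 B1 \<epsilon> + err m2 B2 \<epsilon>)" if "0 < \<epsilon>" "\<epsilon> < min b 1" for \<epsilon>
  proof -
    have "\<bar>transport_dist d K (m1 \<epsilon>) (m2 \<epsilon>)
      - transport_dist d K (\<lambda>v. m1 0 v + \<epsilon> * B1 v) (\<lambda>v. m2 0 v + \<epsilon> * B2 v)\<bar>
      \<le> D * ((\<Sum>v\<in>K. \<bar>m1 \<epsilon> v - (m1 0 v + \<epsilon> * B1 v)\<bar>) + (\<Sum>v\<in>K. \<bar>m2 \<epsilon> v - (m2 0 v + \<epsilon> * B2 v)\<bar>))"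
      using that by (intro transport_dist_lipschitz m1 m2 p1 p2 nonneg sym D K) auto
    then show ?thesis
      using that unfolding err_def by (simp add: divide_right_mono add_divide_distrib[symmetric])
  qed
  then have "\<forall>\<^sub>F \<epsilon> in at_right 0. norm ((transport_dist d K (m1 \<epsilon>) (m2 \<epsilon>)
      - transport_dist d K (\<lambda>v. m1 0 v + \<epsilon> * B1 v) (\<lambda>v. m2 0 v + \<epsilon> * B2 v)) / \<epsilon>)
      \<le> D * (err m1 B1 \<epsilon> + err m2 B2 \<epsilon>)"
    unfolding eventually_at_right_field using \<open>0 < b\<close> by (intro exI[of _ "min b 1"]) auto
  then show ?thesis
    using lim by (rule Lim_null_comparison)
qed

lemma transport_dist_right_differentiable:
  fixes m1 m2 :: "real \<Rightarrow> 'v \<Rightarrow> real"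
  assumes K: "finite K" and nonneg: "\<And>a b. 0 \<le> d a b" and sym: "\<And>a b. d a b = d b a"
    and m1: "\<And>\<epsilon>. \<epsilon> \<in> {0..1} \<Longrightarrow> prob_supported_on K (m1 \<epsilon>)"
    and m2: "\<And>\<epsilon>. \<epsilon> \<in> {0..1} \<Longrightarrow> prob_supported_on K (m2 \<epsilon>)"
    and B1: "\<And>v. v \<in> K \<Longrightarrow> ((\<lambda>\<epsilon>. (m1 \<epsilon> v - m1 0 v) / \<epsilon>) \<longlongrightarrow> B1 v) (at_right 0)"
      "\<And>v. v \<notin> K \<Longrightarrow> B1 v = 0"
    and B2: "\<And>v. v \<in> K \<Longrightarrow> ((\<lambda>\<epsilon>. (m2 \<epsilon> v - m2 0 v) / \<epsilon>) \<longlongrightarrow> B2 v) (at_right 0)"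
      "\<And>v. v \<notin> K \<Longrightarrow> B2 v = 0"
  shows "\<exists>L. ((\<lambda>\<epsilon>. (transport_dist d K (m1 \<epsilon>) (m2 \<epsilon>) - transport_dist d K (m1 0) (m2 0)) / \<epsilon>)
    \<longlongrightarrow> L) (at_right 0)"
proof -
  obtain b1 b2 where "0 < b1" "0 < b2"
    and p1: "\<And>t. t \<in> {0..b1} \<Longrightarrow> prob_supported_on K (\<lambda>v. m1 0 v + t * B1 v)"
    and p2: "\<And>t. t \<in> {0..b2} \<Longrightarrow> prob_supported_on K (\<lambda>v. m2 0 v + t * B2 v)"
    using linearization_prob_supported_on[OF K m1 B1] linearization_prob_supported_on[OF K m2 B2]
    by metis
  define b where "b = min b1 b2"
  have "0 < b" and p: "\<And>t. t \<in> {0..b} \<Longrightarrow> prob_supported_on K (\<lambda>v. m1 0 v + t * B1 v)"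
      "\<And>t. t \<in> {0..b} \<Longrightarrow> prob_supported_on K (\<lambda>v. m2 0 v + t * B2 v)"
    using \<open>0 < b1\<close> \<open>0 < b2\<close> p1 p2 unfolding b_def by auto
  obtain S where "((\<lambda>t. (transport_dist d K (\<lambda>v. m1 0 v + t * B1 v) (\<lambda>v. m2 0 v + t * B2 v)
      - transport_dist d K (m1 0) (m2 0)) / t) \<longlongrightarrow> S) (at_right 0)"
    using transport_dist_affine_path_right_differentiable[where d=d, OF K nonneg sym \<open>0 < b\<close> p] by blast
  then have "((\<lambda>\<epsilon>. (transport_dist d K (\<lambda>v. m1 0 v + \<epsilon> * B1 v) (\<lambda>v. m2 0 v + \<epsilon> * B2 v)
      - transport_dist d K (m1 0) (m2 0)) / \<epsilon>
      + (transport_dist d K (m1 \<epsilon>) (m2 \<epsilon>)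
      - transport_dist d K (\<lambda>v. m1 0 v + \<epsilon> * B1 v) (\<lambda>v. m2 0 v + \<epsilon> * B2 v)) / \<epsilon>) \<longlongrightarrow> S + 0)
      (at_right 0)"
    using transport_dist_linearization_error[where d=d, OF K nonneg sym m1 m2 \<open>0 < b\<close> p B1(1) B2(1)]
    by (rule tendsto_add)
  then show ?thesis
    by (auto simp: diff_divide_distrib)
qed

lemma local_walk_common_support:
  assumes walk: "random_walk V d mu" and local: "local_walk V mu" and S: "finite S" "S \<subseteq> V"
  obtains K where "finite K" "S \<subseteq> K" "K \<subseteq> V"
    "\<And>z \<epsilon>. z \<in> S \<Longrightarrow> \<epsilon> \<in> {0..1} \<Longrightarrow> prob_supported_on K (mu z \<epsilon>)"
proof -
  have "\<forall>z\<in>S. \<exists>Kz. finite Kz \<and> (\<forall>\<epsilon>\<in>{0..1}. {v. mu z \<epsilon> v \<noteq> 0} \<subseteq> Kz)"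
    using local S(2) unfolding local_walk_def by blast
  then obtain Kz where "\<forall>z\<in>S. finite (Kz z) \<and> (\<forall>\<epsilon>\<in>{0..1}. {v. mu z \<epsilon> v \<noteq> 0} \<subseteq> Kz z)"
    by (rule bchoice[THEN exE])
  then have Kz: "\<And>z. z \<in> S \<Longrightarrow> finite (Kz z)"
    "\<And>z \<epsilon>. z \<in> S \<Longrightarrow> \<epsilon> \<in> {0..1} \<Longrightarrow> {v. mu z \<epsilon> v \<noteq> 0} \<subseteq> Kz z"
    by auto
  define K where "K = (S \<union> (\<Union>z\<in>S. Kz z)) \<inter> V"
  show ?thesis
  proof (rule that)
    show "finite K" "S \<subseteq> K" "K \<subseteq> V"
      unfolding K_def using S Kz(1) by auto
    show "prob_supported_on K (mu z \<epsilon>)" if "z \<in> S" "\<epsilon> \<in> {0..1}" for z \<epsilon>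
    proof (rule prob_on_imp_prob_supported_on)
      show "prob_on V (mu z \<epsilon>)"
        using walk that S(2) unfolding random_walk_def by blast
      show "mu z \<epsilon> v = 0" if "v \<in> V - K" for v
        using Kz(2)[of z \<epsilon>] \<open>z \<in> S\<close> \<open>\<epsilon> \<in> {0..1}\<close> that unfolding K_def by blast
    qed (use \<open>finite K\<close> \<open>K \<subseteq> V\<close> in auto)
  qed
qed

lemma random_walk_transport_dist_at_0:
  assumes "random_walk V d mu" "Metric_space V d" "finite K" "K \<subseteq> V" "x \<in> K" "y \<in> K"
  shows "transport_dist d K (mu x 0) (mu y 0) = d x y"
proof -
  interpret Metric_space V d by fact
  have "mu x 0 = (\<lambda>v. if v = x then 1 else 0)" "mu y 0 = (\<lambda>v. if v = y then 1 else 0)"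
    using assms(1,4-6) unfolding random_walk_def by auto
  moreover have "d a y \<le> d a b + d b y" if "a \<in> K" "b \<in> K" for a b
    using triangle assms(4,6) that by blast
  ultimately show ?thesis
    using transport_dist_Dirac[where d=d, OF assms(3,5,6) nonneg] assms(4,6) by auto
qed

lemma ORic_eps_over_eps_tendsto:
  assumes "0 < d x y" and W: "\<forall>\<^sub>F \<epsilon> in at_right 0. W1 V d (mu x \<epsilon>) (mu y \<epsilon>) = W \<epsilon>"
    and L: "((\<lambda>\<epsilon>. (W \<epsilon> - d x y) / \<epsilon>) \<longlongrightarrow> L) (at_right 0)"
  shows "((\<lambda>\<epsilon>. ORic_eps V d mu \<epsilon> x y / \<epsilon>) \<longlongrightarrow> - L / d x y) (at_right 0)"
proof -
  have "((\<lambda>\<epsilon>. - ((W \<epsilon> - d x y) / \<epsilon>) / d x y) \<longlongrightarrow> - L / d x y) (at_right 0)"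
    using L \<open>0 < d x y\<close> by (intro tendsto_divide tendsto_minus tendsto_const) auto
  moreover have "\<forall>\<^sub>F \<epsilon> in at_right 0. - ((W \<epsilon> - d x y) / \<epsilon>) / d x y = ORic_eps V d mu \<epsilon> x y / \<epsilon>"
    using W by eventually_elim (use \<open>0 < d x y\<close> in \<open>simp add: ORic_eps_def field_simps flip: divide_minus_left\<close>)
  ultimately show ?thesis
    by (rule Lim_transform_eventually)
qed

theorem mainTheorem8:
  fixes V :: "'v set" and E :: "'v \<Rightarrow> 'v \<Rightarrow> bool" and d :: "'v \<Rightarrow> 'v \<Rightarrow> real"
    and mu :: "'v \<Rightarrow> real \<Rightarrow> 'v \<Rightarrow> real"
  assumes "locally_finite_graph V E"
    and "Metric_space V d" and "Metric_space.mcomplete V d"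
    and "random_walk V d mu" and "local_walk V mu" and "time_analytic V mu"
    and "x \<in> V" and "y \<in> V" and "x \<noteq> y"
  shows "\<exists>L::real. ((\<lambda>\<epsilon>. ORic_eps V d mu \<epsilon> x y / \<epsilon>) \<longlongrightarrow> L) (at_right 0)"
proof -
  interpret Metric_space V d by fact
  note xy = assms(7-9)
  obtain K where K: "finite K" "{x, y} \<subseteq> K" "K \<subseteq> V"
    and walks: "\<And>z \<epsilon>. z \<in> {x, y} \<Longrightarrow> \<epsilon> \<in> {0..1} \<Longrightarrow> prob_supported_on K (mu z \<epsilon>)"
    using local_walk_common_support[OF assms(4,5), of "{x, y}"] xy by blast
  then have wx: "\<And>\<epsilon>. \<epsilon> \<in> {0..1} \<Longrightarrow> prob_supported_on K (mu x \<epsilon>)"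
    and wy: "\<And>\<epsilon>. \<epsilon> \<in> {0..1} \<Longrightarrow> prob_supported_on K (mu y \<epsilon>)"
    by auto
  obtain Bx where Bx: "\<And>v. v \<in> K \<Longrightarrow> ((\<lambda>\<epsilon>. (mu x \<epsilon> v - mu x 0 v) / \<epsilon>) \<longlongrightarrow> Bx v) (at_right 0)"
      "\<And>v. v \<notin> K \<Longrightarrow> Bx v = 0"
    using time_analytic_rates[OF assms(6) xy(1) K(3)] by blast
  obtain By where By: "\<And>v. v \<in> K \<Longrightarrow> ((\<lambda>\<epsilon>. (mu y \<epsilon> v - mu y 0 v) / \<epsilon>) \<longlongrightarrow> By v) (at_right 0)"
      "\<And>v. v \<notin> K \<Longrightarrow> By v = 0"
    using time_analytic_rates[OF assms(6) xy(2) K(3)] by blast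
  obtain L where "((\<lambda>\<epsilon>. (transport_dist d K (mu x \<epsilon>) (mu y \<epsilon>)
      - transport_dist d K (mu x 0) (mu y 0)) / \<epsilon>) \<longlongrightarrow> L) (at_right 0)"
    using transport_dist_right_differentiable[where d=d, OF K(1) nonneg commute wx wy Bx By] by blast
  moreover have "transport_dist d K (mu x 0) (mu y 0) = d x y"
    using random_walk_transport_dist_at_0[OF assms(4,2) K(1,3)] K(2) by simp
  ultimately have L: "((\<lambda>\<epsilon>. (transport_dist d K (mu x \<epsilon>) (mu y \<epsilon>) - d x y) / \<epsilon>) \<longlongrightarrow> L) (at_right 0)"
    by simp
  have W: "\<forall>\<^sub>F \<epsilon> in at_right 0. W1 V d (mu x \<epsilon>) (mu y \<epsilon>) = transport_dist d K (mu x \<epsilon>) (mu y \<epsilon>)"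
    unfolding eventually_at_right_field using W1_eq_transport_dist[OF K(1,3) wx wy]
    by (intro exI[of _ 1]) auto
  have "0 < d x y"
    using xy nonneg[of x y] zero[of x y] by linarith
  from ORic_eps_over_eps_tendsto[OF this W L] show ?thesis ..
qed

end
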